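(* Let $f_k(z;213)=\sum_{n\ge 1} a_{n,k}(213)z^n$, where $a_{n,k}(213)$ is the number of cyclic permutations $\pi\in\mathfrak S_n$ whose one-line notation avoids $\delta_k=k(k-1)\cdots21$ and whose cycle form $C(\pi)$ avoids $213$. Then for $k\ge 4$, \[f_k(z;213)=\frac{z}{1-f_{k-1}(z;213)},\] with $f_1(z;213)=0$, $f_2(z;213)=z$, and $f_3(z;213)=\frac{z(1-z)}{1-2z}$.
   Context: A permutation $\pi\in\mathfrak S_n$ is cyclic if it consists of a single $n$-cycle. For cyclic $\pi$, $C(\pi)=(1,c_2,\dots,c_n)$ with $c_2=\pi(1)$, $c_{i+1}=\pi(c_i)$, viewed as the sequence $1c_2\cdots c_n$ for pattern avoidance. A sequence avoids a pattern $\sigma\in\mathfrak S_m$ if no subsequence of length $m$ is in the same relative order as $\sigma$. The one-line notation of $\pi$ is $\pi_1\cdots\pi_n$, $\pi_i=\pi(i)$. *)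

theory Defs
  imports "HOL-Combinatorics.Permutations" "HOL-Computational_Algebra.Formal_Power_Series"
begin

text \<open>Permutations of {1..n} are functions nat => nat permuting {1..n} (identity elsewhere).
  A permutation is cyclic if it consists of a single n-cycle, i.e. the orbit of 1 is all of {1..n}.\<close>
definition cyclic_perm :: "nat \<Rightarrow> (nat \<Rightarrow> nat) \<Rightarrow> bool" where
  "cyclic_perm n p \<longleftrightarrow> p permutes {1..n} \<and> 1 \<le> n \<and> {(p ^^ m) 1 | m. True} = {1..n}"

definition one_line :: "nat \<Rightarrow> (nat \<Rightarrow> nat) \<Rightarrow> nat list" where
  "one_line n p = map p [1..<n+1]"

definition cycle_form :: "nat \<Rightarrow> (nat \<Rightarrow> nat) \<Rightarrow> nat list" where
  "cycle_form n p = map (\<lambda>i. (p ^^ i) 1) [0..<n]"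

definition contains_pattern :: "nat list \<Rightarrow> nat list \<Rightarrow> bool" where
  "contains_pattern xs sigma \<longleftrightarrow>
     (\<exists>idx :: nat \<Rightarrow> nat. strict_mono_on {..<length sigma} idx \<and>
        (\<forall>a<length sigma. idx a < length xs) \<and>
        (\<forall>a<length sigma. \<forall>b<length sigma. (xs ! idx a < xs ! idx b) \<longleftrightarrow> (sigma ! a < sigma ! b)))"

definition avoids :: "nat list \<Rightarrow> nat list \<Rightarrow> bool" where
  "avoids xs sigma \<longleftrightarrow> \<not> contains_pattern xs sigma"

definition delta :: "nat \<Rightarrow> nat list" where
  "delta k = rev [1..<k+1]"

definition a_213 :: "nat \<Rightarrow> nat \<Rightarrow> nat" where
  "a_213 n k = card {p. cyclic_perm n p \<and> avoids (one_line n p) (delta k)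
                        \<and> avoids (cycle_form n p) [2,1,3]}"

definition f_213 :: "nat \<Rightarrow> real fps" where
  "f_213 k = Abs_fps (\<lambda>n. if n = 0 then 0 else real (a_213 n k))"

end

(*
  The cycle form C of a 213-avoiding cyclic permutation, which starts with its least entry a,
  splits as C = a # B @ rest, where B is the block of entries at least the entry following a:
  213-avoidance forces B to consist of the largest values, and B and a # rest are again
  213-avoiding cycle forms; conversely every such pair glues to one. The permutation maps
  B - {last B} into B and every other entry below B, so a decreasing subsequence of the one-line
  notation lives either on B or on a # rest, the latter read in the cycle a # rest with a (which
  replaces last B) compared as the largest entry. Recording four variants of "has a decreasing
  subsequence of length k" (with and without the last entry of the cycle form, with the usual
  order or with the head on top) turns the split into convolution equations for power series:
  F_k = z + P_(k-1) F_k, P_k = z + P_k G_k, Q_k = z + Q_k G_(k-2) and a similar one for G_k.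
  Such fixpoint equations have unique solutions, which gives G_k = P_(k-1) and P_k = F_k for
  k >= 3, hence F_k = z + F_(k-1) F_k with F_k = f_k(z;213).
*)
theory Submission
  imports Defs "HOL-Library.Sublist" "HOL-Combinatorics.Cycles"
begin

section \<open>Decreasing subsets\<close>

definition decreasing_on :: "('a \<Rightarrow> 'a \<Rightarrow> bool) \<Rightarrow> ('a \<Rightarrow> 'b::linorder) \<Rightarrow> 'a set \<Rightarrow> bool" where
  "decreasing_on lt v S \<longleftrightarrow> (\<forall>x\<in>S. \<forall>y\<in>S. lt x y \<longrightarrow> v y < v x)"

text \<open>For \<open>lt = (<)\<close> and \<open>A = {1..n}\<close>, \<open>has_decreasing lt v A k\<close> says that the one-line
  notation of \<open>v\<close> contains an occurrence of \<open>\<delta>\<^sub>k\<close>.\<close>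
definition has_decreasing :: "('a \<Rightarrow> 'a \<Rightarrow> bool) \<Rightarrow> ('a \<Rightarrow> 'b::linorder) \<Rightarrow> 'a set \<Rightarrow> nat \<Rightarrow> bool" where
  "has_decreasing lt v A k \<longleftrightarrow> (\<exists>S\<subseteq>A. finite S \<and> card S = k \<and> decreasing_on lt v S)"

lemma decreasing_on_subset: "decreasing_on lt v S \<Longrightarrow> T \<subseteq> S \<Longrightarrow> decreasing_on lt v T"
  unfolding decreasing_on_def by blast

lemma has_decreasing_0 [simp]: "has_decreasing lt v A 0"
  unfolding has_decreasing_def decreasing_on_def by (intro exI[of _ "{}"]) auto

lemma has_decreasing_empty [simp]: "has_decreasing lt v {} k \<longleftrightarrow> k = 0"
  unfolding has_decreasing_def decreasing_on_def by auto

lemma has_decreasing_subset: "has_decreasing lt v A k \<Longrightarrow> A \<subseteq> A' \<Longrightarrow> has_decreasing lt v A' k"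
  unfolding has_decreasing_def by blast

lemma has_decreasing_Diff_singleton:
  assumes "has_decreasing lt v A k"
  shows "has_decreasing lt v (A - {e}) (k - 1)"
proof -
  obtain S where S: "S \<subseteq> A" "finite S" "card S = k" "decreasing_on lt v S"
    using assms unfolding has_decreasing_def by blast
  have "k - 1 \<le> card (S - {e})"
    using S by (simp add: card_Diff_singleton_if)
  then obtain T where "T \<subseteq> S - {e}" "card T = k - 1" "finite T"
    by (rule obtain_subset_with_card_n)
  then show ?thesis
    unfolding has_decreasing_def using S decreasing_on_subset[of lt v S T] by blast
qed

lemma has_decreasing_le:
  assumes "has_decreasing lt v A k" "k' \<le> k"
  shows "has_decreasing lt v A k'"
proof -
  obtain S where S: "S \<subseteq> A" "finite S" "card S = k" "decreasing_on lt v S"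
    using assms(1) unfolding has_decreasing_def by blast
  obtain T where "T \<subseteq> S" "card T = k'" "finite T"
    using obtain_subset_with_card_n[of k' S] S assms(2) by auto
  then show ?thesis
    unfolding has_decreasing_def using S decreasing_on_subset[of lt v S T] by blast
qed

lemma has_decreasing_1: "x \<in> A \<Longrightarrow> \<not> lt x x \<Longrightarrow> has_decreasing lt v A 1"
  unfolding has_decreasing_def decreasing_on_def by (intro exI[of _ "{x}"]) auto

lemma has_decreasing_singleton:
  assumes "\<not> lt e e"
  shows "has_decreasing lt v {e} k \<longleftrightarrow> k \<le> 1"
proof
  assume "has_decreasing lt v {e} k"
  then obtain S where "S \<subseteq> {e}" "card S = k"
    unfolding has_decreasing_def by blast
  then show "k \<le> 1"
    using card_mono[of "{e}" S] by auto
next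
  have "has_decreasing lt v {e} 1"
    using assms by (intro has_decreasing_1) auto
  then show "k \<le> 1 \<Longrightarrow> has_decreasing lt v {e} k"
    using has_decreasing_le by blast
qed

lemma has_decreasing_image:
  assumes inj: "inj_on f A"
    and lt: "\<And>x y. x \<in> A \<Longrightarrow> y \<in> A \<Longrightarrow> lt' (f x) (f y) \<Longrightarrow> lt x y"
    and v: "\<And>x y. x \<in> A \<Longrightarrow> y \<in> A \<Longrightarrow> v x < v y \<Longrightarrow> v' (f x) < v' (f y)"
    and dec: "has_decreasing lt v A k"
  shows "has_decreasing lt' v' (f ` A) k"
proof -
  obtain S where S: "S \<subseteq> A" "finite S" "card S = k" "decreasing_on lt v S"
    using dec unfolding has_decreasing_def by blast
  have "card (f ` S) = k"
    using S inj by (simp add: card_image inj_on_subset)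
  moreover have "decreasing_on lt' v' (f ` S)"
    unfolding decreasing_on_def
  proof (intro ballI impI)
    fix x' y' assume "x' \<in> f ` S" "y' \<in> f ` S" "lt' x' y'"
    then obtain x y where xy: "x \<in> S" "y \<in> S" "x' = f x" "y' = f y" "lt' (f x) (f y)"
      by blast
    then have "v y < v x"
      using S(1,4) lt unfolding decreasing_on_def by blast
    then show "v' y' < v' x'"
      using xy S(1) v by blast
  qed
  ultimately show ?thesis
    unfolding has_decreasing_def using S by (intro exI[of _ "f ` S"]) auto
qed

lemma has_decreasing_bij_betw:
  assumes bij: "bij_betw f A A'"
    and lt: "\<And>x y. x \<in> A \<Longrightarrow> y \<in> A \<Longrightarrow> lt x y \<longleftrightarrow> lt' (f x) (f y)"
    and v: "\<And>x y. x \<in> A \<Longrightarrow> y \<in> A \<Longrightarrow> v x < v y \<longleftrightarrow> v' (f x) < v' (f y)"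
  shows "has_decreasing lt v A k \<longleftrightarrow> has_decreasing lt' v' A' k"
proof
  show "has_decreasing lt v A k \<Longrightarrow> has_decreasing lt' v' A' k"
    using has_decreasing_image[of f A lt' lt v v'] bij lt v
    unfolding bij_betw_def by blast
next
  assume dec: "has_decreasing lt' v' A' k"
  define g where "g = inv_into A f"
  have g: "bij_betw g A' A"
    unfolding g_def using bij by (rule bij_betw_inv_into)
  have fg: "f (g x) = x" and gA: "g x \<in> A" if "x \<in> A'" for x
    using that bij g unfolding g_def by (auto simp: bij_betw_inv_into_right bij_betw_apply)
  have "has_decreasing lt v (g ` A') k"
  proof (rule has_decreasing_image[OF _ _ _ dec])
    show "inj_on g A'"
      using g by (rule bij_betw_imp_inj_on)
    show "lt (g x) (g y) \<Longrightarrow> lt' x y" "v' x < v' y \<Longrightarrow> v (g x) < v (g y)"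
      if "x \<in> A'" "y \<in> A'" for x y
      using that lt[of "g x" "g y"] v[of "g x" "g y"] fg gA by auto
  qed
  then show "has_decreasing lt v A k"
    using g by (simp add: bij_betw_def)
qed

lemma has_decreasing_cong:
  assumes "\<And>x y. x \<in> A \<Longrightarrow> y \<in> A \<Longrightarrow> lt x y \<longleftrightarrow> lt' x y"
    and "\<And>x y. x \<in> A \<Longrightarrow> y \<in> A \<Longrightarrow> v x < v y \<longleftrightarrow> v' x < v' y"
  shows "has_decreasing lt v A k \<longleftrightarrow> has_decreasing lt' v' A k"
  using has_decreasing_bij_betw[of id A A lt lt' v v'] assms by simp

lemma has_decreasing_Un:
  assumes "A = A1 \<union> A2"
    and across: "\<And>x y. x \<in> A1 - A2 \<Longrightarrow> y \<in> A2 - A1 \<Longrightarrow> \<not> decreasing_on lt v {x, y}"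
  shows "has_decreasing lt v A k \<longleftrightarrow> has_decreasing lt v A1 k \<or> has_decreasing lt v A2 k"
proof
  assume "has_decreasing lt v A k"
  then obtain S where S: "S \<subseteq> A" "finite S" "card S = k" "decreasing_on lt v S"
    unfolding has_decreasing_def by blast
  have "S \<subseteq> A1 \<or> S \<subseteq> A2"
  proof (rule ccontr)
    assume "\<not> (S \<subseteq> A1 \<or> S \<subseteq> A2)"
    then obtain x y where "x \<in> S" "y \<in> S" "x \<in> A1 - A2" "y \<in> A2 - A1"
      using S(1) assms(1) by blast
    then show False
      using across decreasing_on_subset[OF S(4), of "{x, y}"] by blast
  qed
  then show "has_decreasing lt v A1 k \<or> has_decreasing lt v A2 k"
    using S unfolding has_decreasing_def by blast
next
  show "has_decreasing lt v A1 k \<or> has_decreasing lt v A2 k \<Longrightarrow> has_decreasing lt v A k"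
    using assms(1) has_decreasing_subset by blast
qed

lemma has_decreasing_insert:
  assumes e: "e \<notin> S" "\<not> lt e e"
    and pair: "\<And>x. x \<in> S \<Longrightarrow> decreasing_on lt v {x, e}"
  shows "has_decreasing lt v (insert e S) k \<longleftrightarrow> has_decreasing lt v S (k - 1)"
proof
  show "has_decreasing lt v (insert e S) k \<Longrightarrow> has_decreasing lt v S (k - 1)"
    using has_decreasing_Diff_singleton[of lt v "insert e S" k e] e(1) by simp
next
  assume "has_decreasing lt v S (k - 1)"
  then obtain T where T: "T \<subseteq> S" "finite T" "card T = k - 1" "decreasing_on lt v T"
    unfolding has_decreasing_def by blast
  show "has_decreasing lt v (insert e S) k"
  proof (cases k)
    case (Suc m)
    have "decreasing_on lt v (insert e T)"
      using T(1,4) e(2) pair unfolding decreasing_on_def by (simp add: subset_iff)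
    moreover have "card (insert e T) = k"
      using T e(1) Suc by (subst card_insert_disjoint) auto
    ultimately show ?thesis
      unfolding has_decreasing_def using T by (intro exI[of _ "insert e T"]) auto
  qed simp
qed

section \<open>Cycle forms\<close>

lemma cycle_of_list_nth:
  assumes "distinct cs" "i < length cs"
  shows "cycle_of_list cs (cs ! i) = cs ! (Suc i mod length cs)"
proof -
  have "map (cycle_of_list cs) cs = rotate1 cs"
    using cyclic_rotation[OF assms(1), of 1] by simp
  then show ?thesis
    using assms(2) by (metis nth_map nth_rotate1)
qed

lemma cycle_of_list_funpow_hd:
  assumes "distinct cs" "i < length cs"
  shows "(cycle_of_list cs ^^ i) (hd cs) = cs ! i"
proof -
  have "cs \<noteq> []"
    using assms(2) by auto
  then have "(cycle_of_list cs ^^ i) (hd cs) = map (cycle_of_list cs ^^ i) cs ! 0"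
    by (simp add: hd_conv_nth)
  also have "\<dots> = rotate i cs ! 0"
    using cyclic_rotation[OF assms(1)] by simp
  also have "\<dots> = cs ! i"
    using \<open>cs \<noteq> []\<close> assms(2) nth_rotate[of 0 cs i] by simp
  finally show ?thesis .
qed

lemma cycle_of_list_append_Cons:
  assumes "distinct (xs @ x # ys)"
  shows "cycle_of_list (xs @ x # ys) x = (if ys = [] then hd (xs @ [x]) else hd ys)"
proof -
  have "cycle_of_list (xs @ x # ys) ((xs @ x # ys) ! length xs)
      = (xs @ x # ys) ! (Suc (length xs) mod length (xs @ x # ys))"
    using assms by (intro cycle_of_list_nth) auto
  then show ?thesis
    by (cases ys) (auto simp: hd_conv_nth nth_append)
qed

lemma cycle_of_list_in: "x \<in> set cs \<Longrightarrow> cycle_of_list cs x \<in> set cs"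
  by (simp add: permutes_in_image[OF cycle_permutes])

lemma cycle_of_list_last:
  assumes "distinct cs" "cs \<noteq> []"
  shows "cycle_of_list cs (last cs) = hd cs"
  using assms cycle_of_list_append_Cons[of "butlast cs" "last cs" "[]"] by simp

lemma cycle_of_list_Cons_append:
  assumes d: "distinct (a # B @ rest)" and "B \<noteq> []"
  shows "cycle_of_list (a # B @ rest) a = hd B"
    and "x \<in> set B \<Longrightarrow> x \<noteq> last B \<Longrightarrow> cycle_of_list (a # B @ rest) x = cycle_of_list B x"
    and "cycle_of_list (a # B @ rest) (last B) = cycle_of_list (a # rest) a"
    and "x \<in> set rest \<Longrightarrow> cycle_of_list (a # B @ rest) x = cycle_of_list (a # rest) x"
proof -
  show "cycle_of_list (a # B @ rest) a = hd B"
    using cycle_of_list_append_Cons[of "[]" a "B @ rest"] d \<open>B \<noteq> []\<close> by simp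
next
  assume "x \<in> set B" "x \<noteq> last B"
  then obtain B1 B2 where B: "B = B1 @ x # B2" "B2 \<noteq> []"
    by (metis last_snoc split_list)
  moreover have "distinct (B1 @ x # B2)"
    using d B by auto
  ultimately show "cycle_of_list (a # B @ rest) x = cycle_of_list B x"
    using d cycle_of_list_append_Cons[of "a # B1" x "B2 @ rest"]
      cycle_of_list_append_Cons[of B1 x B2] by simp
next
  obtain B' l where B: "B = B' @ [l]"
    using \<open>B \<noteq> []\<close> by (metis rev_exhaust)
  then show "cycle_of_list (a # B @ rest) (last B) = cycle_of_list (a # rest) a"
    using d cycle_of_list_append_Cons[of "a # B'" l rest]
      cycle_of_list_append_Cons[of "[]" a rest] by simp
next
  assume "x \<in> set rest"
  then obtain R1 R2 where "rest = R1 @ x # R2"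
    by (meson split_list)
  then show "cycle_of_list (a # B @ rest) x = cycle_of_list (a # rest) x"
    using d cycle_of_list_append_Cons[of "a # B @ R1" x R2]
      cycle_of_list_append_Cons[of "a # R1" x R2] by simp
qed

section \<open>213-avoiding cycle forms\<close>

definition avoids_213 :: "nat list \<Rightarrow> bool" where
  "avoids_213 xs \<longleftrightarrow> \<not> (\<exists>x y z. subseq [x, y, z] xs \<and> y < x \<and> x < z)"

lemma set_mono_subseq: "subseq xs ys \<Longrightarrow> set xs \<subseteq> set ys"
  by (induct rule: list_emb.induct) auto

lemma avoids_213_subseq: "avoids_213 ys \<Longrightarrow> subseq xs ys \<Longrightarrow> avoids_213 xs"
  unfolding avoids_213_def using subseq_order.trans by blast

lemma avoids_213_dropWhile_less:
  assumes av: "avoids_213 (b # ws)" and d: "distinct (b # ws)"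
    and z: "z \<in> set (dropWhile (\<lambda>x. b \<le> x) ws)"
  shows "z < b"
proof (rule ccontr)
  assume "\<not> z < b"
  moreover have "z \<noteq> b"
    using d z set_dropWhileD by fastforce
  ultimately have "b < z"
    by simp
  obtain r rs where drop: "dropWhile (\<lambda>x. b \<le> x) ws = r # rs"
    using z by (cases "dropWhile (\<lambda>x. b \<le> x) ws") auto
  then have "r < b"
    using hd_dropWhile[of "\<lambda>x. b \<le> x" ws] by simp
  then have "z \<in> set rs"
    using z drop \<open>b < z\<close> by auto
  then have "subseq [r, z] (r # rs)"
    by (simp add: subseq_singleton_left)
  then have "subseq [r, z] ws"
    using takeWhile_dropWhile_id[of "\<lambda>x. b \<le> x" ws] drop by (metis list_emb_append2)
  then have "subseq [b, r, z] (b # ws)"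
    by simp
  then show False
    using av \<open>r < b\<close> \<open>b < z\<close> unfolding avoids_213_def by blast
qed

lemma avoids_213_Cons_append:
  assumes B: "avoids_213 B" and R: "avoids_213 (a # R)"
    and above: "\<And>x y. x \<in> set B \<Longrightarrow> y \<in> set (a # R) \<Longrightarrow> y < x"
    and min: "\<And>y. y \<in> set R \<Longrightarrow> a < y"
  shows "avoids_213 (a # B @ R)"
  unfolding avoids_213_def
proof
  assume "\<exists>x y z. subseq [x, y, z] (a # B @ R) \<and> y < x \<and> x < z"
  then obtain x y z where pat: "subseq [x, y, z] (a # B @ R)" "y < x" "x < z"
    by blast
  have "y \<in> set (a # B @ R)"
    using set_mono_subseq[OF pat(1)] by simp
  then have "x \<noteq> a"
    using pat(2) above[of y a] min[of y] by auto
  then have "subseq [x, y, z] (B @ R)"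
    using pat(1) by simp
  then obtain xs1 xs2 where split: "[x, y, z] = xs1 @ xs2" "subseq xs1 B" "subseq xs2 R"
    by (rule subseq_appendE)
  consider "xs2 = []" | "xs1 = []" | "xs1 \<noteq> []" "xs2 \<noteq> []"
    by blast
  then show False
  proof cases
    case 1
    then have "subseq [x, y, z] B"
      using split by simp
    then show False
      using B pat unfolding avoids_213_def by blast
  next
    case 2
    then have "subseq [x, y, z] (a # R)"
      using split by (simp add: list_emb_Cons)
    then show False
      using R pat unfolding avoids_213_def by blast
  next
    case 3
    then have "x = hd xs1" "z = last xs2"
      using arg_cong[OF split(1), of hd] arg_cong[OF split(1), of last] by simp_all
    then have "x \<in> set xs1" "z \<in> set xs2"
      using 3 by simp_all
    then have "x \<in> set B" "z \<in> set R"
      using set_mono_subseq[OF split(2)] set_mono_subseq[OF split(3)] by auto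
    then show False
      using above[of x z] pat(3) by simp
  qed
qed

text \<open>The cycle forms \<open>C(\<pi>)\<close> avoiding 213 of the cyclic permutations \<open>\<pi>\<close> of \<open>V\<close>, written
  starting from the least element of \<open>V\<close>.\<close>
definition cycle_form_213 :: "nat set \<Rightarrow> nat list \<Rightarrow> bool" where
  "cycle_form_213 V C \<longleftrightarrow> C \<noteq> [] \<and> distinct C \<and> set C = V \<and> (\<forall>x\<in>V. hd C \<le> x) \<and> avoids_213 C"

lemma cycle_form_213_hd:
  assumes "cycle_form_213 {a..<a+n} C"
  shows "hd C = a" "0 < n"
proof -
  have "C \<noteq> []" "hd C \<in> {a..<a+n}" "\<forall>x\<in>{a..<a+n}. hd C \<le> x"
    using assms unfolding cycle_form_213_def by (auto simp del: atLeastLessThan_iff)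
  then show "0 < n"
    by auto
  then have "hd C \<le> a"
    using \<open>\<forall>x\<in>{a..<a+n}. hd C \<le> x\<close> by simp
  then show "hd C = a"
    using \<open>hd C \<in> {a..<a+n}\<close> by simp
qed

lemma cycle_form_213_length: "cycle_form_213 {a..<a+n} C \<Longrightarrow> length C = n"
  unfolding cycle_form_213_def by (metis card_atLeastLessThan distinct_card add_diff_cancel_left')

lemma cycle_form_213_Cons: "cycle_form_213 {a..<a+n} C \<Longrightarrow> C = a # tl C"
  using cycle_form_213_hd[of a n C] unfolding cycle_form_213_def by (cases C) auto

lemma cycle_form_213_singleton: "cycle_form_213 {a..<a+1} C \<longleftrightarrow> C = [a]"
proof
  assume "cycle_form_213 {a..<a+1} C"
  then have "length C = 1" "C = a # tl C"
    using cycle_form_213_length cycle_form_213_Cons by blast+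
  then show "C = [a]"
    by (cases "tl C") auto
next
  have "avoids_213 [a]"
    unfolding avoids_213_def using set_mono_subseq by fastforce
  then show "C = [a] \<Longrightarrow> cycle_form_213 {a..<a+1} C"
    unfolding cycle_form_213_def by auto
qed

lemma cycle_form_213_block_sets:
  assumes C: "cycle_form_213 {a..<a+n} (a # B @ rest)" and "b \<in> set B"
    and B_ge: "\<forall>x\<in>set B. b \<le> x" and rest_less: "\<forall>z\<in>set rest. z < b"
  shows "set B = {b..<a+n}" "set (a # rest) = {a..<b}" "b = a + length (a # rest)"
proof -
  have dist: "distinct (a # B @ rest)" and setC: "set (a # B @ rest) = {a..<a+n}"
    using C unfolding cycle_form_213_def by auto
  have mem: "x = a \<or> x \<in> set B \<or> x \<in> set rest \<longleftrightarrow> a \<le> x \<and> x < a + n" for x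
    using arg_cong[OF setC, of "\<lambda>S. x \<in> S"] by simp
  have "a < b" "b < a + n"
    using mem[of b] dist \<open>b \<in> set B\<close> by (auto simp: le_less)
  show setB: "set B = {b..<a+n}"
  proof (intro set_eqI iffI)
    show "x \<in> {b..<a+n}" if "x \<in> set B" for x
      using that mem[of x] B_ge by auto
    show "x \<in> set B" if "x \<in> {b..<a+n}" for x
      using that mem[of x] \<open>a < b\<close> rest_less by auto
  qed
  show setR: "set (a # rest) = {a..<b}"
  proof (intro set_eqI iffI)
    show "x \<in> {a..<b}" if "x \<in> set (a # rest)" for x
      using that mem[of x] \<open>a < b\<close> rest_less by auto
    show "x \<in> set (a # rest)" if "x \<in> {a..<b}" for x
      using that mem[of x] B_ge \<open>b < a + n\<close> by fastforce
  qed
  have "length (a # rest) = card (set (a # rest))"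
    using dist by (simp add: distinct_card)
  then show "b = a + length (a # rest)"
    unfolding setR using \<open>a < b\<close> by simp
qed

text \<open>Splitting at the first entry \<open>b\<close> after the head: by 213-avoidance, the entries
  \<open>\<ge> b\<close> form a block \<open>B\<close> following the head, and they are exactly the largest values.\<close>
lemma cycle_form_213_split:
  assumes C: "cycle_form_213 {a..<a+n} C" and n: "2 \<le> n"
  obtains B rest where "C = a # B @ rest"
    and "cycle_form_213 {a + length (a # rest)..<a+n} B"
    and "cycle_form_213 {a..<a + length (a # rest)} (a # rest)"
proof -
  have dist: "distinct C" and av: "avoids_213 C"
    using C unfolding cycle_form_213_def by auto
  have "length (tl C) = n - 1"
    using cycle_form_213_length[OF C] by simp
  then obtain b ws where "tl C = b # ws"
    using n by (cases "tl C") auto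
  then have Cbws: "C = a # b # ws"
    using cycle_form_213_Cons[OF C] by simp
  define B where "B = b # takeWhile (\<lambda>x. b \<le> x) ws"
  define rest where "rest = dropWhile (\<lambda>x. b \<le> x) ws"
  have C_eq: "C = a # B @ rest"
    unfolding B_def rest_def Cbws by simp
  have B_ge: "\<forall>x\<in>set B. b \<le> x"
    unfolding B_def by (auto dest: set_takeWhileD)
  have "subseq (b # ws) C"
    unfolding Cbws by (rule list_emb_Cons) (rule subseq_order.refl)
  then have "avoids_213 (b # ws)"
    using av avoids_213_subseq by blast
  then have rest_less: "\<forall>z\<in>set rest. z < b"
    using avoids_213_dropWhile_less dist Cbws unfolding rest_def by simp
  have "cycle_form_213 {a..<a+n} (a # B @ rest)" "b \<in> set B"
    using C unfolding C_eq B_def by simp_all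
  note sets = cycle_form_213_block_sets[OF this B_ge rest_less]
  have "subseq B C" "subseq (a # rest) C"
    using C_eq by (auto intro: list_emb_Cons list_emb_append2)
  then have "avoids_213 B" "avoids_213 (a # rest)"
    using av avoids_213_subseq by blast+
  then show thesis
    using that[OF C_eq] dist sets B_ge C_eq unfolding cycle_form_213_def B_def by auto
qed

lemma cycle_form_213_join:
  assumes B: "cycle_form_213 {a+j..<a+n} B" and R: "cycle_form_213 {a..<a+j} (a # rest)"
    and "j < n"
  shows "cycle_form_213 {a..<a+n} (a # B @ rest)"
proof -
  have setB: "set B = {a+j..<a+n}" and setR: "set (a # rest) = {a..<a+j}"
    and dist: "distinct B" "distinct (a # rest)"
    using B R unfolding cycle_form_213_def by auto
  have "avoids_213 (a # B @ rest)"
  proof (rule avoids_213_Cons_append)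
    show "avoids_213 B" "avoids_213 (a # rest)"
      using B R unfolding cycle_form_213_def by auto
    show "y < x" if "x \<in> set B" "y \<in> set (a # rest)" for x y
    proof -
      have "x \<in> {a+j..<a+n}" "y \<in> {a..<a+j}"
        using that setB setR by blast+
      then show ?thesis
        by simp
    qed
    show "a < y" if "y \<in> set rest" for y
    proof -
      have "y \<in> {a..<a+j}" "y \<noteq> a"
        using that setR dist(2) by auto
      then show ?thesis
        by simp
    qed
  qed
  moreover have "set (a # B @ rest) = {a..<a+n}"
  proof -
    have "set (a # B @ rest) = set B \<union> set (a # rest)"
      by auto
    also have "\<dots> = {a..<a+n}"
      unfolding setB setR using \<open>j < n\<close> by (simp add: ivl_disj_un_two(3) Un_commute)
    finally show ?thesis .
  qed
  moreover have "set B \<inter> set (a # rest) = {}"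
    unfolding setB setR by auto
  then have "distinct (a # B @ rest)"
    using dist by auto
  ultimately show ?thesis
    unfolding cycle_form_213_def by auto
qed

section \<open>Decreasing subsequences of cycle forms\<close>

text \<open>Splitting a cycle form \<open>a # B @ rest\<close>
  replaces \<open>last B\<close>, which lies above all of \<open>rest\<close>, by \<open>a\<close> in the shorter cycle form \<open>a # rest\<close>;
  comparing \<open>a\<close> as the largest element keeps the decreasing sets unchanged.\<close>
definition less_top :: "nat \<Rightarrow> nat \<Rightarrow> nat \<Rightarrow> bool" where
  "less_top t x y \<longleftrightarrow> x \<noteq> t \<and> (y = t \<or> x < y)"

definition has_dec :: "nat list \<Rightarrow> nat \<Rightarrow> bool" where
  "has_dec C k \<longleftrightarrow> has_decreasing (<) (cycle_of_list C) (set C) k"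

text \<open>The cycle maps \<open>last C\<close> back to \<open>hd C\<close>; in a split \<open>a # B @ rest\<close>, \<open>last B\<close> is the only
  entry of \<open>B\<close> whose image lies outside \<open>B\<close>.\<close>
definition has_dec_butlast :: "nat list \<Rightarrow> nat \<Rightarrow> bool" where
  "has_dec_butlast C k \<longleftrightarrow> has_decreasing (<) (cycle_of_list C) (set C - {last C}) k"

definition has_dec_top :: "nat list \<Rightarrow> nat \<Rightarrow> bool" where
  "has_dec_top C k \<longleftrightarrow> has_decreasing (less_top (hd C)) (cycle_of_list C) (set C) k"

definition has_dec_top_butlast :: "nat list \<Rightarrow> nat \<Rightarrow> bool" where
  "has_dec_top_butlast C k \<longleftrightarrow>
     has_decreasing (less_top (hd C)) (cycle_of_list C) (set C - {last C}) k"

lemma less_top_irrefl [simp]: "\<not> less_top t x x"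
  unfolding less_top_def by auto

lemma has_dec_singleton [simp]:
  "has_dec [a] k \<longleftrightarrow> k \<le> 1" "has_dec_butlast [a] k \<longleftrightarrow> k = 0"
  "has_dec_top [a] k \<longleftrightarrow> k \<le> 1" "has_dec_top_butlast [a] k \<longleftrightarrow> k = 0"
  unfolding has_dec_def has_dec_butlast_def has_dec_top_def has_dec_top_butlast_def
  using has_decreasing_singleton[of "(<)" a] has_decreasing_singleton[of "less_top a" a] by auto

lemma has_dec_Suc: "has_dec C (Suc k) \<Longrightarrow> has_dec_butlast C k"
  unfolding has_dec_def has_dec_butlast_def using has_decreasing_Diff_singleton by fastforce

lemma has_dec_le: "has_dec C k \<Longrightarrow> k' \<le> k \<Longrightarrow> has_dec C k'"
  and has_dec_butlast_le: "has_dec_butlast C k \<Longrightarrow> k' \<le> k \<Longrightarrow> has_dec_butlast C k'"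
  unfolding has_dec_def has_dec_butlast_def using has_decreasing_le by blast+

text \<open>In a split \<open>a # B @ rest\<close> with \<open>B\<close> the block of the largest entries, the cyclic permutation
  \<open>\<sigma>\<close> maps \<open>B - {last B}\<close> into \<open>B\<close> above \<open>hd B\<close> and everything else below \<open>hd B\<close>. Hence no
  decreasing set mixes these two parts (up to the entry \<open>a\<close>, which is the least one), and
  \<open>\<sigma>\<close> restricted to either part is essentially the cyclic permutation of \<open>B\<close> or of \<open>a # rest\<close>.\<close>
locale block_split =
  fixes a :: nat and B rest :: "nat list"
  assumes distinct: "distinct (a # B @ rest)" and B_nonempty: "B \<noteq> []"
    and B_above: "\<And>x z. x \<in> set B \<Longrightarrow> z \<in> set (a # rest) \<Longrightarrow> z < x"
    and hd_B_le: "\<And>x. x \<in> set B \<Longrightarrow> hd B \<le> x"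
    and a_less: "\<And>z. z \<in> set rest \<Longrightarrow> a < z"
begin

abbreviation \<sigma> :: "nat \<Rightarrow> nat" where
  "\<sigma> \<equiv> cycle_of_list (a # B @ rest)"

lemma distinct_B: "distinct B"
  and distinct_a_rest: "distinct (a # rest)"
  and last_B_in: "last B \<in> set B"
  and a_notin_B: "a \<notin> set B"
  and a_notin_rest: "a \<notin> set rest"
  and B_rest_disjoint: "set B \<inter> set rest = {}"
  using distinct B_nonempty by auto

lemma \<sigma>_a: "\<sigma> a = hd B"
  using cycle_of_list_Cons_append(1)[OF distinct B_nonempty] .

lemma \<sigma>_B:
  assumes "x \<in> set B" "x \<noteq> last B"
  shows "\<sigma> x = cycle_of_list B x" "hd B < cycle_of_list B x"
proof -
  show "\<sigma> x = cycle_of_list B x"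
    using cycle_of_list_Cons_append(2)[OF distinct B_nonempty assms] .
  have "cycle_of_list B x \<noteq> cycle_of_list B (last B)"
    using assms last_B_in permutes_inj[OF cycle_permutes[of B]] by (auto dest: injD)
  then show "hd B < cycle_of_list B x"
    using hd_B_le[OF cycle_of_list_in[OF assms(1)]]
      cycle_of_list_last[OF distinct_B B_nonempty] by simp
qed

lemma \<sigma>_rest:
  "\<sigma> (last B) = cycle_of_list (a # rest) a"
  "x \<in> set rest \<Longrightarrow> \<sigma> x = cycle_of_list (a # rest) x"
  using cycle_of_list_Cons_append(3,4)[OF distinct B_nonempty] by auto

lemma \<sigma>_below:
  assumes "x \<in> insert (last B) (set rest)"
  shows "\<sigma> x < hd B"
proof -
  obtain y where "y \<in> set (a # rest)" "\<sigma> x = cycle_of_list (a # rest) y"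
    using assms \<sigma>_rest by auto
  then have "\<sigma> x \<in> set (a # rest)"
    using cycle_of_list_in by metis
  then show ?thesis
    using B_above[of "hd B"] B_nonempty by simp
qed

lemma \<sigma>_B_above:
  assumes "x \<in> set B" "x \<noteq> last B" "y \<in> insert a (insert (last B) (set rest))"
  shows "\<sigma> y < \<sigma> x"
proof -
  have "\<sigma> y \<le> hd B"
    using assms(3) \<sigma>_a \<sigma>_below by (cases "y = a") (auto simp: less_imp_le)
  then show ?thesis
    using \<sigma>_B[OF assms(1,2)] by simp
qed

lemma less_top_B: "x \<in> set B \<Longrightarrow> y \<in> set B \<Longrightarrow> less_top a x y \<longleftrightarrow> x < y"
  using a_notin_B unfolding less_top_def by auto

lemma less_top_rest:
  "R \<subseteq> set rest \<Longrightarrow> x \<in> insert (last B) R \<Longrightarrow> y \<in> insert (last B) R \<Longrightarrow> less_top a x y \<longleftrightarrow> x < y"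
  using a_notin_B a_notin_rest last_B_in unfolding less_top_def by auto

lemma has_decreasing_B:
  assumes "\<And>x y. x \<in> set B \<Longrightarrow> y \<in> set B \<Longrightarrow> lt x y \<longleftrightarrow> x < y"
  shows "has_decreasing lt \<sigma> (set B) k \<longleftrightarrow> has_dec B k"
    and "has_decreasing lt \<sigma> (set B - {last B}) k \<longleftrightarrow> has_dec_butlast B k"
proof -
  have "\<sigma> x < \<sigma> y \<longleftrightarrow> cycle_of_list B x < cycle_of_list B y" if "x \<in> set B" "y \<in> set B" for x y
    using that \<sigma>_B[of x] \<sigma>_B[of y] \<sigma>_B_above[of x y] \<sigma>_B_above[of y x]
      cycle_of_list_last[OF distinct_B B_nonempty]
    by (cases "x = last B"; cases "y = last B") auto
  then show "has_decreasing lt \<sigma> (set B) k \<longleftrightarrow> has_dec B k"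
    and "has_decreasing lt \<sigma> (set B - {last B}) k \<longleftrightarrow> has_dec_butlast B k"
    unfolding has_dec_def has_dec_butlast_def using assms by (auto intro!: has_decreasing_cong)
qed

lemma has_decreasing_rest:
  assumes R: "R \<subseteq> set rest"
    and lt: "\<And>x y. x \<in> insert (last B) R \<Longrightarrow> y \<in> insert (last B) R \<Longrightarrow> lt x y \<longleftrightarrow> x < y"
  shows "has_decreasing lt \<sigma> (insert (last B) R) k
     \<longleftrightarrow> has_decreasing (less_top a) (cycle_of_list (a # rest)) (insert a R) k"
proof (rule has_decreasing_bij_betw)
  define f where "f x = (if x = last B then a else x)" for x
  have "last B \<notin> R" "a \<notin> R"
    using R last_B_in B_rest_disjoint a_notin_rest by auto
  then show "bij_betw f (insert (last B) R) (insert a R)"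
    unfolding bij_betw_def inj_on_def f_def by auto
  have R_less: "x < last B" if "x \<in> R" for x
    using that R B_above last_B_in by auto
  show "lt x y \<longleftrightarrow> less_top a (f x) (f y)" if "x \<in> insert (last B) R" "y \<in> insert (last B) R" for x y
    using that lt[of x y] R_less[of x] R_less[of y] \<open>a \<notin> R\<close> unfolding less_top_def f_def by auto
  have \<sigma>_f: "\<sigma> x = cycle_of_list (a # rest) (f x)" if "x \<in> insert (last B) R" for x
  proof (cases "x = last B")
    case True
    then show ?thesis
      using \<sigma>_rest(1) unfolding f_def by simp
  next
    case False
    then have "x \<in> set rest"
      using that R by auto
    then show ?thesis
      using \<sigma>_rest(2) False unfolding f_def by simp
  qed
  show "\<sigma> x < \<sigma> y \<longleftrightarrow> cycle_of_list (a # rest) (f x) < cycle_of_list (a # rest) (f y)"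
    if "x \<in> insert (last B) R" "y \<in> insert (last B) R" for x y
    using \<sigma>_f[OF that(1)] \<sigma>_f[OF that(2)] by simp
qed

lemma not_decreasing_B_rest:
  assumes "x \<in> set B" "x \<noteq> last B" "y \<in> insert a (set rest)"
  shows "\<not> decreasing_on (<) \<sigma> {x, y}"
  using B_above[of x y] \<sigma>_B_above[of x y] assms unfolding decreasing_on_def by auto

lemma not_decreasing_top_B_rest:
  assumes "x \<in> insert a (set B - {last B})" "y \<in> set rest"
  shows "\<not> decreasing_on (less_top a) \<sigma> {x, y}"
proof -
  have "less_top a y x"
    using assms B_above[of x y] a_notin_rest unfolding less_top_def by auto
  moreover have "\<sigma> y < \<sigma> x"
    using assms \<sigma>_a \<sigma>_below[of y] \<sigma>_B_above[of x y] by (cases "x = a") auto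
  ultimately show ?thesis
    unfolding decreasing_on_def by auto
qed

lemma has_decreasing_less_Un:
  assumes "S \<subseteq> set B" "X \<subseteq> insert a (insert (last B) (set rest))"
    and "last B \<in> S \<longleftrightarrow> last B \<in> X"
  shows "has_decreasing (<) \<sigma> (S \<union> X) k \<longleftrightarrow> has_decreasing (<) \<sigma> S k \<or> has_decreasing (<) \<sigma> X k"
proof (rule has_decreasing_Un[OF refl])
  fix x y assume "x \<in> S - X" "y \<in> X - S"
  then have "x \<in> set B" "x \<noteq> last B" "y \<in> insert a (set rest)"
    using assms by auto
  then show "\<not> decreasing_on (<) \<sigma> {x, y}"
    by (rule not_decreasing_B_rest)
qed

lemma has_decreasing_top_Un:
  assumes "R \<subseteq> set rest"
  shows "has_decreasing (less_top a) \<sigma> (insert a (set B) \<union> insert (last B) R) k \<longleftrightarrow>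
    has_decreasing (less_top a) \<sigma> (insert a (set B)) k \<or> has_decreasing (less_top a) \<sigma> (insert (last B) R) k"
proof (rule has_decreasing_Un[OF refl])
  fix x y assume "x \<in> insert a (set B) - insert (last B) R" "y \<in> insert (last B) R - insert a (set B)"
  then have "x \<in> insert a (set B - {last B})" "y \<in> set rest"
    using assms last_B_in by auto
  then show "\<not> decreasing_on (less_top a) \<sigma> {x, y}"
    by (rule not_decreasing_top_B_rest)
qed

lemma has_decreasing_insert_a_rest:
  assumes R: "R \<subseteq> set rest"
  shows "has_decreasing (<) \<sigma> (insert a (insert (last B) R)) k
     \<longleftrightarrow> has_decreasing (less_top a) (cycle_of_list (a # rest)) (insert a R) (k - 1)"
proof -
  have "has_decreasing (<) \<sigma> (insert a (insert (last B) R)) k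
      \<longleftrightarrow> has_decreasing (<) \<sigma> (insert (last B) R) (k - 1)"
  proof (rule has_decreasing_insert)
    show "a \<notin> insert (last B) R"
      using R a_notin_B a_notin_rest last_B_in by auto
    show "decreasing_on (<) \<sigma> {x, a}" if "x \<in> insert (last B) R" for x
    proof -
      have "x \<in> insert (last B) (set rest)"
        using that R by auto
      then have "a < x" "\<sigma> x < \<sigma> a"
        using B_above[of "last B" a] last_B_in a_less \<sigma>_a \<sigma>_below by auto
      then show ?thesis
        unfolding decreasing_on_def by auto
    qed
  qed simp
  also have "\<dots> \<longleftrightarrow> has_decreasing (less_top a) (cycle_of_list (a # rest)) (insert a R) (k - 1)"
    using R by (rule has_decreasing_rest) auto
  finally show ?thesis .
qed

lemma has_decreasing_top_insert_a_B:
  "has_decreasing (less_top a) \<sigma> (insert a (set B - {last B})) k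
     \<longleftrightarrow> has_decreasing (less_top a) \<sigma> (set B - {last B}) (k - 1)"
proof (rule has_decreasing_insert)
  show "decreasing_on (less_top a) \<sigma> {x, a}" if "x \<in> set B - {last B}" for x
    using that \<sigma>_a \<sigma>_B[of x] a_notin_B unfolding decreasing_on_def less_top_def by auto
qed (use a_notin_B in auto)

lemma has_decreasing_top_a_B:
  "has_decreasing (less_top a) \<sigma> (insert a (set B)) k \<longleftrightarrow> has_dec B k \<or> has_dec_butlast B (k - 1)"
proof -
  have "insert a (set B) = set B \<union> insert a (set B - {last B})"
    by auto
  then have "has_decreasing (less_top a) \<sigma> (insert a (set B)) k \<longleftrightarrow>
      has_decreasing (less_top a) \<sigma> (set B) k \<or>
      has_decreasing (less_top a) \<sigma> (insert a (set B - {last B})) k"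
  proof (rule has_decreasing_Un)
    fix x y assume "x \<in> set B - insert a (set B - {last B})" "y \<in> insert a (set B - {last B}) - set B"
    then have "x = last B" "y = a"
      by auto
    moreover have "less_top a (last B) a"
      using a_notin_B last_B_in unfolding less_top_def by auto
    moreover have "\<sigma> (last B) < \<sigma> a"
      using \<sigma>_below \<sigma>_a by auto
    ultimately show "\<not> decreasing_on (less_top a) \<sigma> {x, y}"
      unfolding decreasing_on_def by auto
  qed
  moreover have "has_decreasing (less_top a) \<sigma> (insert a (set B - {last B})) k
      \<longleftrightarrow> has_decreasing (less_top a) \<sigma> (set B - {last B}) (k - 1)"
    by (rule has_decreasing_top_insert_a_B)
  ultimately show ?thesis
    using has_decreasing_B less_top_B by simp
qed

lemma has_dec_split: "has_dec (a # B @ rest) k \<longleftrightarrow> has_dec B k \<or> has_dec_top (a # rest) (k - 1)"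
proof -
  have split: "set (a # B @ rest) = set B \<union> insert a (insert (last B) (set rest))"
    using last_B_in by auto
  have "has_dec (a # B @ rest) k \<longleftrightarrow> has_decreasing (<) \<sigma> (set B) k
      \<or> has_decreasing (<) \<sigma> (insert a (insert (last B) (set rest))) k"
    unfolding has_dec_def split using last_B_in by (intro has_decreasing_less_Un) auto
  then show ?thesis
    using has_decreasing_B(1) has_decreasing_insert_a_rest[of "set rest"] unfolding has_dec_top_def by simp
qed

lemma has_dec_butlast_split:
  "has_dec_butlast (a # B @ rest) k \<longleftrightarrow>
    (if rest = [] then has_dec_butlast B k \<or> k \<le> 1
     else has_dec B k \<or> has_dec_top_butlast (a # rest) (k - 1))"
proof (cases "rest = []")
  case True
  have split: "set (a # B @ rest) - {last (a # B @ rest)} = (set B - {last B}) \<union> {a}"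
    using True a_notin_B B_nonempty by auto
  have "has_dec_butlast (a # B @ rest) k \<longleftrightarrow>
      has_decreasing (<) \<sigma> (set B - {last B}) k \<or> has_decreasing (<) \<sigma> {a} k"
    unfolding has_dec_butlast_def split using a_notin_B last_B_in
    by (intro has_decreasing_less_Un) auto
  moreover have "has_decreasing (<) \<sigma> {a} k \<longleftrightarrow> k \<le> 1"
    by (rule has_decreasing_singleton) simp
  ultimately show ?thesis
    using True has_decreasing_B(2) by simp
next
  case False
  let ?R = "set rest - {last rest}"
  have split: "set (a # B @ rest) - {last (a # B @ rest)} = set B \<union> insert a (insert (last B) ?R)"
    using False last_B_in B_rest_disjoint a_notin_B a_notin_rest by auto
  have "has_dec_butlast (a # B @ rest) k \<longleftrightarrow> has_decreasing (<) \<sigma> (set B) k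
      \<or> has_decreasing (<) \<sigma> (insert a (insert (last B) ?R)) k"
    unfolding has_dec_butlast_def split using last_B_in by (intro has_decreasing_less_Un) auto
  moreover have "insert a ?R = set (a # rest) - {last (a # rest)}"
    using False a_notin_rest by auto
  ultimately show ?thesis
    using False has_decreasing_B(1) has_decreasing_insert_a_rest[of ?R]
    unfolding has_dec_top_butlast_def by auto
qed

lemma has_dec_top_split:
  "has_dec_top (a # B @ rest) k \<longleftrightarrow>
    has_dec B k \<or> has_dec_butlast B (k - 1) \<or> has_dec_top (a # rest) k"
proof -
  have split: "set (a # B @ rest) = insert a (set B) \<union> insert (last B) (set rest)"
    using last_B_in by auto
  have "has_dec_top (a # B @ rest) k \<longleftrightarrow> has_decreasing (less_top a) \<sigma> (insert a (set B)) k
      \<or> has_decreasing (less_top a) \<sigma> (insert (last B) (set rest)) k"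
    unfolding has_dec_top_def list.sel(1) split by (rule has_decreasing_top_Un) simp
  then show ?thesis
    using has_decreasing_top_a_B has_decreasing_rest[of "set rest"] less_top_rest[of "set rest"]
    unfolding has_dec_top_def by simp
qed

lemma has_dec_top_butlast_split:
  "has_dec_top_butlast (a # B @ rest) k \<longleftrightarrow>
    (if rest = [] then has_dec_butlast B (k - 1)
     else has_dec B k \<or> has_dec_butlast B (k - 1) \<or> has_dec_top_butlast (a # rest) k)"
proof (cases "rest = []")
  case True
  have "set (a # B @ rest) - {last (a # B @ rest)} = insert a (set B - {last B})"
    using True a_notin_B B_nonempty by auto
  moreover have "has_decreasing (less_top a) \<sigma> (insert a (set B - {last B})) k
      \<longleftrightarrow> has_decreasing (less_top a) \<sigma> (set B - {last B}) (k - 1)"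
    by (rule has_decreasing_top_insert_a_B)
  ultimately show ?thesis
    using True has_decreasing_B(2) less_top_B unfolding has_dec_top_butlast_def by simp
next
  case False
  let ?R = "set rest - {last rest}"
  have split: "set (a # B @ rest) - {last (a # B @ rest)} = insert a (set B) \<union> insert (last B) ?R"
    using False last_B_in B_rest_disjoint a_notin_B a_notin_rest by auto
  have "has_dec_top_butlast (a # B @ rest) k \<longleftrightarrow>
      has_decreasing (less_top a) \<sigma> (insert a (set B)) k \<or>
      has_decreasing (less_top a) \<sigma> (insert (last B) ?R) k"
    unfolding has_dec_top_butlast_def list.sel(1) split by (rule has_decreasing_top_Un) auto
  moreover have "insert a ?R = set (a # rest) - {last (a # rest)}"
    using False a_notin_rest by auto
  ultimately show ?thesis
    using False has_decreasing_top_a_B has_decreasing_rest[of ?R] less_top_rest[of ?R]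
    unfolding has_dec_top_butlast_def by auto
qed

end

section \<open>Counting split cycle forms\<close>

text \<open>The classes of cycle forms counted by the power series \<open>F\<^sub>k\<close>, \<open>P\<^sub>k\<close>, \<open>G\<^sub>k\<close>, \<open>Q\<^sub>k\<close> below;
  \<open>F\<^sub>k\<close> is \<open>f\<^sub>k(z;213)\<close>.\<close>
definition classF :: "nat \<Rightarrow> nat list \<Rightarrow> bool" where
  "classF k C \<longleftrightarrow> \<not> has_dec C k"

definition classP :: "nat \<Rightarrow> nat list \<Rightarrow> bool" where
  "classP k C \<longleftrightarrow> \<not> has_dec_top C k"

definition classG :: "nat \<Rightarrow> nat list \<Rightarrow> bool" where
  "classG k C \<longleftrightarrow> \<not> has_dec C k \<and> \<not> has_dec_butlast C (k - 1)"

definition classQ :: "nat \<Rightarrow> nat list \<Rightarrow> bool" where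
  "classQ k C \<longleftrightarrow> \<not> has_dec_top C (k - 1) \<and> \<not> has_dec_top_butlast C (k - 2)"

lemma class_singleton [simp]:
  "classF k [a] \<longleftrightarrow> 2 \<le> k" "classP k [a] \<longleftrightarrow> 2 \<le> k"
  "classG k [a] \<longleftrightarrow> 2 \<le> k" "classQ k [a] \<longleftrightarrow> 3 \<le> k"
  unfolding classF_def classP_def classG_def classQ_def by auto

context block_split
begin

lemma classF_split: "classF k (a # B @ rest) \<longleftrightarrow> classF k B \<and> classP (k - 1) (a # rest)"
  unfolding classF_def classP_def has_dec_split by simp

lemma classP_split: "classP k (a # B @ rest) \<longleftrightarrow> classG k B \<and> classP k (a # rest)"
  unfolding classG_def classP_def has_dec_top_split by simp

lemma classG_split:
  "classG k (a # B @ rest) \<longleftrightarrow>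
    (if rest = [] then classG k B else classF (k - 1) B) \<and> classQ k (a # rest)"
proof (cases "rest = []")
  case True
  then show ?thesis
    unfolding classG_def has_dec_split has_dec_butlast_split by auto
next
  case False
  have "has_dec B k \<Longrightarrow> has_dec B (k - 1)"
    by (erule has_dec_le) simp
  then show ?thesis
    using False unfolding classG_def classF_def classQ_def has_dec_split has_dec_butlast_split
    by (auto simp: diff_diff_left numeral_2_eq_2)
qed

lemma classQ_split: "classQ k (a # B @ rest) \<longleftrightarrow> classG (k - 2) B \<and> classQ k (a # rest)"
proof (cases "3 \<le> k")
  case False
  then show ?thesis
    unfolding classQ_def has_dec_top_butlast_def by simp
next
  case True
  have "has_dec B (k - 1) \<Longrightarrow> has_dec B (k - 2)"
    by (erule has_dec_le) simp
  moreover have "has_dec_butlast B (k - 2) \<Longrightarrow> has_dec_butlast B (k - 3)"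
    by (erule has_dec_butlast_le) simp
  moreover have "Suc (k - 3) = k - 2"
    using True by simp
  then have "has_dec B (k - 2) \<Longrightarrow> has_dec_butlast B (k - 3)"
    using has_dec_Suc[of B "k - 3"] by simp
  ultimately show ?thesis
    using True unfolding classQ_def classG_def has_dec_top_split has_dec_top_butlast_split
    by (auto simp: diff_diff_left numeral_2_eq_2 numeral_3_eq_3)
qed

end

definition count_213 :: "nat \<Rightarrow> nat \<Rightarrow> (nat list \<Rightarrow> bool) \<Rightarrow> nat" where
  "count_213 a n P = card {C. cycle_form_213 {a..<a+n} C \<and> P C}"

lemma finite_cycle_form_213: "finite V \<Longrightarrow> finite {C. cycle_form_213 V C \<and> P C}"
proof (rule finite_subset)
  show "{C. cycle_form_213 V C \<and> P C} \<subseteq> {xs. set xs \<subseteq> V \<and> length xs = card V}"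
    unfolding cycle_form_213_def by (auto simp: distinct_card)
  show "finite V \<Longrightarrow> finite {xs. set xs \<subseteq> V \<and> length xs = card V}"
    by (rule finite_lists_length_eq)
qed

lemma count_213_0 [simp]: "count_213 a 0 P = 0"
  unfolding count_213_def cycle_form_213_def by simp

lemma count_213_1: "count_213 a 1 P = (if P [a] then 1 else 0)"
proof -
  have "{C. cycle_form_213 {a..<a+1} C \<and> P C} = (if P [a] then {[a]} else {})"
    using cycle_form_213_singleton by auto
  then show ?thesis
    unfolding count_213_def by simp
qed

lemma count_213_eq_0:
  assumes "\<And>C. cycle_form_213 {a..<a+n} C \<Longrightarrow> \<not> P C"
  shows "count_213 a n P = 0"
proof -
  have empty: "{C. cycle_form_213 {a..<a+n} C \<and> P C} = {}"
    using assms by blast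
  show ?thesis
    unfolding count_213_def empty by simp
qed

lemma block_split_cycle_form_213:
  assumes B: "cycle_form_213 {a+j..<a+n} B" and R: "cycle_form_213 {a..<a+j} (a # rest)"
    and "j < n"
  shows "block_split a B rest"
proof
  have setB: "set B = {a+j..<a+n}" and setR: "set (a # rest) = {a..<a+j}"
    using B R unfolding cycle_form_213_def by auto
  show "distinct (a # B @ rest)"
    using cycle_form_213_join[OF assms] unfolding cycle_form_213_def by blast
  show "B \<noteq> []" "\<And>x. x \<in> set B \<Longrightarrow> hd B \<le> x"
    using B unfolding cycle_form_213_def by auto
  show "z < x" if "x \<in> set B" "z \<in> set (a # rest)" for x z
  proof -
    have "x \<in> {a+j..<a+n}" "z \<in> {a..<a+j}"
      using that setB setR by blast+
    then show ?thesis
      by simp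
  qed
  show "a < z" if "z \<in> set rest" for z
  proof -
    have "z \<in> {a..<a+j}" "z \<noteq> a"
      using that setR R unfolding cycle_form_213_def by auto
    then show ?thesis
      by simp
  qed
qed

lemma cycle_form_213_iff_join:
  assumes "2 \<le> n"
  shows "cycle_form_213 {a..<a+n} C \<longleftrightarrow> (\<exists>j\<in>{1..<n}. \<exists>B rest. C = a # B @ rest
    \<and> cycle_form_213 {a+j..<a+n} B \<and> cycle_form_213 {a..<a+j} (a # rest))"
proof
  assume C: "cycle_form_213 {a..<a+n} C"
  obtain B rest where "C = a # B @ rest" and
    B: "cycle_form_213 {a + length (a # rest)..<a+n} B" and
    R: "cycle_form_213 {a..<a + length (a # rest)} (a # rest)"
    using cycle_form_213_split[OF C assms] by blast
  moreover have "length (a # rest) < n"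
    using \<open>C = a # B @ rest\<close> cycle_form_213_length[OF C] B unfolding cycle_form_213_def by auto
  ultimately show "\<exists>j\<in>{1..<n}. \<exists>B rest. C = a # B @ rest
    \<and> cycle_form_213 {a+j..<a+n} B \<and> cycle_form_213 {a..<a+j} (a # rest)"
    by (intro bexI[of _ "length (a # rest)"]) auto
qed (auto intro: cycle_form_213_join)

lemma join_cycle_forms_inj:
  assumes "j \<in> {1..<n}" "cycle_form_213 {a+j..<a+n} B" "cycle_form_213 {a..<a+j} R"
    and "j' \<in> {1..<n}" "cycle_form_213 {a+j'..<a+n} B'" "cycle_form_213 {a..<a+j'} R'"
    and eq: "hd R # B @ tl R = hd R' # B' @ tl R'"
  shows "j = j' \<and> B = B' \<and> R = R'"
proof -
  have blocks: "B \<noteq> [] \<and> hd B = a + j \<and> length B = n - j \<and> R = a # tl R"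
    if "j \<in> {1..<n}" "cycle_form_213 {a+j..<a+n} B" "cycle_form_213 {a..<a+j} R" for j B R
    using that cycle_form_213_hd[of "a+j" "n-j" B] cycle_form_213_length[of "a+j" "n-j" B]
      cycle_form_213_Cons[of a j R] unfolding cycle_form_213_def by auto
  note B = blocks[OF assms(1-3)] and B' = blocks[OF assms(4-6)]
  have "B @ tl R = B' @ tl R'"
    using eq by simp
  moreover have "j = j'"
    using B B' arg_cong[OF \<open>B @ tl R = B' @ tl R'\<close>, of hd] by simp
  ultimately show ?thesis
    using B B' append_eq_append_conv[of B B'] by metis
qed

text \<open>Cutting into the block \<open>B\<close> of the top \<open>n - j\<close> values and \<open>a # rest\<close> of the
  bottom \<open>j\<close> values is a bijection.\<close>
lemma count_213_split:
  assumes n: "2 \<le> n"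
    and P: "\<And>j B rest. j \<in> {1..<n} \<Longrightarrow> cycle_form_213 {a+j..<a+n} B
      \<Longrightarrow> cycle_form_213 {a..<a+j} (a # rest) \<Longrightarrow> P (a # B @ rest) \<longleftrightarrow> P1 j B \<and> P2 j (a # rest)"
  shows "count_213 a n P = (\<Sum>j=1..<n. count_213 (a+j) (n-j) (P1 j) * count_213 a j (P2 j))"
proof -
  define T where "T j = {B. cycle_form_213 {a+j..<a+n} B \<and> P1 j B}
    \<times> {R. cycle_form_213 {a..<a+j} R \<and> P2 j R}" for j
  define g :: "nat \<times> nat list \<times> nat list \<Rightarrow> nat list" where "g = (\<lambda>(j, B, R). hd R # B @ tl R)"
  have "bij_betw g (SIGMA j:{1..<n}. T j) {C. cycle_form_213 {a..<a+n} C \<and> P C}"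
  proof (rule bij_betw_imageI)
    show "inj_on g (SIGMA j:{1..<n}. T j)"
    proof (rule inj_onI)
      fix x y assume xy: "x \<in> (SIGMA j:{1..<n}. T j)" "y \<in> (SIGMA j:{1..<n}. T j)" "g x = g y"
      obtain j B R where x: "x = (j, B, R)"
        by (rule prod_cases3)
      obtain j' B' R' where y: "y = (j', B', R')"
        by (rule prod_cases3)
      show "x = y"
        using xy join_cycle_forms_inj[of j n a B R j' B' R'] unfolding x y T_def g_def by auto
    qed
    show "g ` (SIGMA j:{1..<n}. T j) = {C. cycle_form_213 {a..<a+n} C \<and> P C}"
    proof (intro equalityI subsetI)
      fix C assume "C \<in> g ` (SIGMA j:{1..<n}. T j)"
      then obtain j B R where jBR: "j \<in> {1..<n}" "(B, R) \<in> T j" "C = g (j, B, R)"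
        by auto
      then have "R = a # tl R"
        unfolding T_def using cycle_form_213_Cons by blast
      then have "C = a # B @ tl R" and
        BR: "cycle_form_213 {a+j..<a+n} B" "P1 j B" "cycle_form_213 {a..<a+j} (a # tl R)" "P2 j (a # tl R)"
        using jBR unfolding T_def g_def by (metis case_prod_conv list.sel(1), auto)
      then show "C \<in> {C. cycle_form_213 {a..<a+n} C \<and> P C}"
        using jBR(1) cycle_form_213_join[OF BR(1,3)] P[OF jBR(1) BR(1,3)] by simp
    next
      fix C assume "C \<in> {C. cycle_form_213 {a..<a+n} C \<and> P C}"
      then obtain j B rest where "j \<in> {1..<n}" "C = a # B @ rest" "P C"
        "cycle_form_213 {a+j..<a+n} B" "cycle_form_213 {a..<a+j} (a # rest)"
        using cycle_form_213_iff_join[OF n] by blast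
      then show "C \<in> g ` (SIGMA j:{1..<n}. T j)"
        using P unfolding T_def g_def by (intro image_eqI[of _ _ "(j, B, a # rest)"]) auto
    qed
  qed
  then have "count_213 a n P = card (SIGMA j:{1..<n}. T j)"
    unfolding count_213_def by (simp add: bij_betw_same_card)
  also have "\<dots> = (\<Sum>j=1..<n. card (T j))"
    unfolding T_def by (intro card_SigmaI) (auto intro!: finite_cartesian_product finite_cycle_form_213)
  also have "\<dots> = (\<Sum>j=1..<n. count_213 (a+j) (n-j) (P1 j) * count_213 a j (P2 j))"
    unfolding T_def count_213_def card_cartesian_product by (intro sum.cong) auto
  finally show ?thesis .
qed

lemma cycle_form_213_Nil_iff: "cycle_form_213 {a..<a+j} (a # rest) \<Longrightarrow> rest = [] \<longleftrightarrow> j = 1"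
  using cycle_form_213_length[of a j "a # rest"] by auto

lemma count_classF: "2 \<le> n \<Longrightarrow> count_213 a n (classF k) =
    (\<Sum>j=1..<n. count_213 (a+j) (n-j) (classF k) * count_213 a j (classP (k - 1)))"
  by (rule count_213_split) (simp_all add: block_split.classF_split[OF block_split_cycle_form_213])

lemma count_classP: "2 \<le> n \<Longrightarrow> count_213 a n (classP k) =
    (\<Sum>j=1..<n. count_213 (a+j) (n-j) (classG k) * count_213 a j (classP k))"
  by (rule count_213_split) (simp_all add: block_split.classP_split[OF block_split_cycle_form_213])

lemma count_classQ: "2 \<le> n \<Longrightarrow> count_213 a n (classQ k) =
    (\<Sum>j=1..<n. count_213 (a+j) (n-j) (classG (k - 2)) * count_213 a j (classQ k))"
  by (rule count_213_split) (simp_all add: block_split.classQ_split[OF block_split_cycle_form_213])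

lemma count_classG: "2 \<le> n \<Longrightarrow> count_213 a n (classG k) =
    (\<Sum>j=1..<n. count_213 (a+j) (n-j) (if j = 1 then classG k else classF (k - 1)) * count_213 a j (classQ k))"
  by (rule count_213_split)
    (simp_all add: block_split.classG_split[OF block_split_cycle_form_213] cycle_form_213_Nil_iff)

text \<open>The recurrences determine the counts from those of smaller lengths, independently of
  the base point \<open>a\<close>.\<close>
lemma count_213_shift:
  assumes "X \<in> range classF \<union> range classP \<union> range classG \<union> range classQ"
  shows "count_213 a n X = count_213 0 n X"
  using assms
proof (induction n arbitrary: a X rule: less_induct)
  case (less n)
  consider "n = 0" | "n = 1" | "2 \<le> n"
    by linarith
  then show ?case
  proof cases
    case 2
    then show ?thesis
      using less.prems unfolding 2 count_213_1 by auto
  next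
    case 3
    have sum_shift: "(\<Sum>j=1..<n. count_213 (a+j) (n-j) (Y j) * count_213 a j Z)
        = (\<Sum>j=1..<n. count_213 (0+j) (n-j) (Y j) * count_213 0 j Z)"
      if "\<And>j. Y j \<in> range classF \<union> range classP \<union> range classG \<union> range classQ"
        "Z \<in> range classF \<union> range classP \<union> range classG \<union> range classQ" for Y Z
    proof (rule sum.cong[OF refl])
      fix j assume "j \<in> {1..<n}"
      then have "n - j < n" "j < n"
        by auto
      then show "count_213 (a+j) (n-j) (Y j) * count_213 a j Z
          = count_213 (0+j) (n-j) (Y j) * count_213 0 j Z"
        using less.IH that by metis
    qed
    from less.prems obtain k where "X = classF k \<or> X = classP k \<or> X = classG k \<or> X = classQ k"
      by blast
    moreover have ?thesis if "X = classF k"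
      unfolding that count_classF[OF 3] by (rule sum_shift) simp_all
    moreover have ?thesis if "X = classP k"
      unfolding that count_classP[OF 3] by (rule sum_shift) simp_all
    moreover have ?thesis if "X = classG k"
      unfolding that count_classG[OF 3] by (rule sum_shift) simp_all
    moreover have ?thesis if "X = classQ k"
      unfolding that count_classQ[OF 3] by (rule sum_shift) simp_all
    ultimately show ?thesis
      by blast
  qed simp
qed

section \<open>Generating functions\<close>

definition gf_213 :: "(nat list \<Rightarrow> bool) \<Rightarrow> real fps" where
  "gf_213 P = Abs_fps (\<lambda>n. real (count_213 0 n P))"

lemma gf_213_nth_0 [simp]: "fps_nth (gf_213 P) 0 = 0"
  unfolding gf_213_def by simp

lemma gf_213_nth_1: "fps_nth (gf_213 P) (Suc 0) = (if P [0] then 1 else 0)"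
  unfolding gf_213_def using count_213_1[of 0 P] by simp

lemma gf_213_eq_0: "(\<And>n C. cycle_form_213 {0..<n} C \<Longrightarrow> \<not> P C) \<Longrightarrow> gf_213 P = 0"
  unfolding gf_213_def by (rule fps_ext) (simp add: count_213_eq_0)

lemma fps_mult_nth_if_nth_0:
  fixes f g :: "'a::comm_semiring_1 fps"
  assumes "fps_nth f 0 = 0" "fps_nth g 0 = 0"
  shows "fps_nth (f * g) n = (\<Sum>j=1..<n. fps_nth f j * fps_nth g (n - j))"
proof -
  have "fps_nth (f * g) n = (\<Sum>j=0..n. fps_nth f j * fps_nth g (n - j))"
    by (rule fps_mult_nth)
  also have "\<dots> = (\<Sum>j=1..<n. fps_nth f j * fps_nth g (n - j))"
  proof (rule sum.mono_neutral_right)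
    show "\<forall>i\<in>{0..n} - {1..<n}. fps_nth f i * fps_nth g (n - i) = 0"
    proof
      fix i assume "i \<in> {0..n} - {1..<n}"
      then have "i = 0 \<or> i = n"
        by auto
      then show "fps_nth f i * fps_nth g (n - i) = 0"
        using assms by auto
    qed
  qed auto
  finally show ?thesis .
qed

lemma gf_213_eqI:
  assumes "P [0]"
    and rec: "\<And>n. 2 \<le> n \<Longrightarrow> count_213 0 n P = (\<Sum>j=1..<n. count_213 j (n - j) R * count_213 0 j Q)"
    and shift: "\<And>j m. count_213 j m R = count_213 0 m R"
  shows "gf_213 P = fps_X + gf_213 Q * gf_213 R"
proof (rule fps_ext)
  fix n
  have mult: "fps_nth (gf_213 Q * gf_213 R) n = (\<Sum>j=1..<n. fps_nth (gf_213 Q) j * fps_nth (gf_213 R) (n - j))"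
    by (rule fps_mult_nth_if_nth_0) simp_all
  consider "n = 0" | "n = 1" | "2 \<le> n"
    by linarith
  then show "fps_nth (gf_213 P) n = fps_nth (fps_X + gf_213 Q * gf_213 R) n"
  proof cases
    case 3
    have "count_213 0 n P = (\<Sum>j=1..<n. count_213 0 j Q * count_213 0 (n - j) R)"
      unfolding rec[OF 3] by (rule sum.cong[OF refl]) (metis shift mult.commute)
    then show ?thesis
      unfolding fps_add_nth mult using 3 by (simp add: gf_213_def)
  qed (use assms(1) mult in \<open>simp_all add: gf_213_nth_1\<close>)
qed

lemma gf_classF:
  assumes "2 \<le> k"
  shows "gf_213 (classF k) = fps_X + gf_213 (classP (k - 1)) * gf_213 (classF k)"
proof (rule gf_213_eqI)
  show "count_213 j m (classF k) = count_213 0 m (classF k)" for j m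
    by (rule count_213_shift) simp
qed (use assms count_classF[of _ 0] in simp_all)

lemma gf_classP:
  assumes "2 \<le> k"
  shows "gf_213 (classP k) = fps_X + gf_213 (classP k) * gf_213 (classG k)"
proof (rule gf_213_eqI)
  show "count_213 j m (classG k) = count_213 0 m (classG k)" for j m
    by (rule count_213_shift) simp
qed (use assms count_classP[of _ 0] in simp_all)

lemma gf_classQ:
  assumes "3 \<le> k"
  shows "gf_213 (classQ k) = fps_X + gf_213 (classQ k) * gf_213 (classG (k - 2))"
proof (rule gf_213_eqI)
  show "count_213 j m (classG (k - 2)) = count_213 0 m (classG (k - 2))" for j m
    by (rule count_213_shift) simp
qed (use assms count_classQ[of _ 0] in simp_all)

text \<open>The split with \<open>rest = []\<close> contributes \<open>z G\<^sub>k\<close>, present only for \<open>k \<ge> 3\<close>, since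
  \<open>[a]\<close> is counted by \<open>Q\<^sub>k\<close> only then.\<close>
lemma gf_classG:
  assumes "2 \<le> k"
  defines "X3 \<equiv> if 3 \<le> k then fps_X else 0 :: real fps"
  shows "gf_213 (classG k) = fps_X + X3 * gf_213 (classG k) + (gf_213 (classQ k) - X3) * gf_213 (classF (k - 1))"
proof (rule fps_ext)
  fix n
  let ?G = "gf_213 (classG k)" and ?Q = "gf_213 (classQ k)" and ?F = "gf_213 (classF (k - 1))"
  have X3: "fps_nth X3 j = (if j = 1 then fps_nth ?Q 1 else 0)" for j
    unfolding X3_def using gf_213_nth_1[of "classQ k"] by simp
  have mult: "fps_nth (X3 * ?G) n = (\<Sum>j=1..<n. fps_nth X3 j * fps_nth ?G (n - j))"
    "fps_nth ((?Q - X3) * ?F) n = (\<Sum>j=1..<n. fps_nth (?Q - X3) j * fps_nth ?F (n - j))"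
    using X3 by (intro fps_mult_nth_if_nth_0; simp)+
  consider "n = 0" | "n = 1" | "2 \<le> n"
    by linarith
  then show "fps_nth ?G n = fps_nth (fps_X + X3 * ?G + (?Q - X3) * ?F) n"
  proof cases
    case 3
    have "fps_nth ?G n = (\<Sum>j=1..<n. fps_nth X3 j * fps_nth ?G (n - j) + fps_nth (?Q - X3) j * fps_nth ?F (n - j))"
      unfolding gf_213_def fps_nth_Abs_fps count_classG[OF 3] of_nat_sum
    proof (rule sum.cong[OF refl])
      fix j assume "j \<in> {1..<n}"
      then show "real (count_213 (0+j) (n-j) (if j = 1 then classG k else classF (k - 1))
          * count_213 0 j (classQ k)) = fps_nth X3 j * real (count_213 0 (n - j) (classG k))
          + fps_nth (Abs_fps (\<lambda>n. real (count_213 0 n (classQ k))) - X3) j * real (count_213 0 (n - j) (classF (k - 1)))"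
        using X3[of j] count_213_shift[of "classG k" 1 "n - 1"] count_213_shift[of "classF (k - 1)" j "n - j"]
        by (simp add: gf_213_def)
    qed
    also have "\<dots> = fps_nth (X3 * ?G) n + fps_nth ((?Q - X3) * ?F) n"
      unfolding mult by (rule sum.distrib)
    also have "\<dots> = fps_nth (fps_X + X3 * ?G + (?Q - X3) * ?F) n"
      using 3 by simp
    finally show ?thesis .
  qed (use assms(1) mult in \<open>simp_all add: gf_213_nth_1\<close>)
qed

lemma fps_fixpoint_unique:
  fixes A A' B c :: "'a::idom fps"
  assumes "A = c + A * B" "A' = c + A' * B" "fps_nth B 0 = 0"
  shows "A = A'"
proof -
  have "A - A' = (A - A') * B"
    using assms(1,2) by (metis add_diff_cancel_left left_diff_distrib)
  then have "(A - A') * (1 - B) = 0"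
    by (simp add: algebra_simps)
  moreover have "fps_nth (1 - B) 0 = 1"
    using assms(3) by simp
  then have "1 - B \<noteq> 0"
    by auto
  ultimately show ?thesis
    by simp
qed

lemma has_dec_top_1: "C \<noteq> [] \<Longrightarrow> has_dec C 1 \<and> has_dec_top C 1"
  unfolding has_dec_def has_dec_top_def by (intro conjI has_decreasing_1[of "hd C"]) simp_all

lemma gf_213_1:
  "gf_213 (classF 1) = 0" "gf_213 (classP 1) = 0" "gf_213 (classG 1) = 0"
  unfolding classF_def classP_def classG_def
  by (intro gf_213_eq_0; use has_dec_top_1 in \<open>auto simp: cycle_form_213_def\<close>)+

lemma gf_classF_2: "gf_213 (classF 2) = fps_X"
  using gf_classF[of 2] gf_213_1 by simp

lemma gf_classG_2: "gf_213 (classG 2) = fps_X"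
  using gf_classG[of 2] gf_213_1 by simp

lemma gf_classG_3: "gf_213 (classG 3) = gf_213 (classP 2)"
proof (rule fps_fixpoint_unique)
  have "gf_213 (classQ 3) = fps_X"
    using gf_classQ[of 3] gf_213_1 by simp
  then show "gf_213 (classG 3) = fps_X + gf_213 (classG 3) * fps_X"
    using gf_classG[of 3] by (simp add: mult.commute)
  show "gf_213 (classP 2) = fps_X + gf_213 (classP 2) * fps_X"
    using gf_classP[of 2] gf_classG_2 by simp
qed simp

lemma gf_classG_eq_classP: "3 \<le> m \<Longrightarrow> gf_213 (classG m) = gf_213 (classP (m - 1))"
proof (induction m rule: dec_induct)
  case base
  then show ?case
    using gf_classG_3 by simp
next
  case (step m)
  let ?F = "gf_213 (classF m)" and ?P = "gf_213 (classP m)" and ?P' = "gf_213 (classP (m - 1))"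
  have "?F = ?P"
  proof (rule fps_fixpoint_unique[where c = fps_X and B = ?P'])
    show "?F = fps_X + ?F * ?P'"
      using gf_classF[of m] step by (simp add: mult.commute)
    show "?P = fps_X + ?P * ?P'"
      using gf_classP[of m] step by simp
  qed simp
  moreover have "gf_213 (classQ (Suc m)) = ?P'"
  proof (rule fps_fixpoint_unique[where c = fps_X and B = "gf_213 (classG (m - 1))"])
    show "gf_213 (classQ (Suc m)) = fps_X + gf_213 (classQ (Suc m)) * gf_213 (classG (m - 1))"
      using gf_classQ[of "Suc m"] step by (simp add: numeral_2_eq_2)
    show "?P' = fps_X + ?P' * gf_213 (classG (m - 1))"
      using gf_classP[of "m - 1"] step by simp
  qed simp
  ultimately have "gf_213 (classG (Suc m)) = (fps_X + (?P' - fps_X) * ?P) + gf_213 (classG (Suc m)) * fps_X"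
    using gf_classG[of "Suc m"] step by (simp add: algebra_simps)
  moreover have "?P = (fps_X + (?P' - fps_X) * ?P) + ?P * fps_X"
    using gf_classP[of m] step by (simp add: algebra_simps)
  ultimately have "gf_213 (classG (Suc m)) = ?P"
    by (rule fps_fixpoint_unique) simp
  then show ?case
    by simp
qed

lemma gf_classP_eq_classF:
  assumes "3 \<le> m"
  shows "gf_213 (classP m) = gf_213 (classF m)"
proof (rule fps_fixpoint_unique[where c = fps_X and B = "gf_213 (classP (m - 1))"])
  show "gf_213 (classP m) = fps_X + gf_213 (classP m) * gf_213 (classP (m - 1))"
    using gf_classP[of m] gf_classG_eq_classP[of m] assms by simp
  show "gf_213 (classF m) = fps_X + gf_213 (classF m) * gf_213 (classP (m - 1))"
    using gf_classF[of m] assms by (simp add: mult.commute)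
qed simp

lemma gf_classF_rec: "4 \<le> k \<Longrightarrow> gf_213 (classF k) * (1 - gf_213 (classF (k - 1))) = fps_X"
  using gf_classF[of k] gf_classP_eq_classF[of "k - 1"] by (simp add: algebra_simps)

lemma gf_classF_3: "gf_213 (classF 3) * (1 - 2 * fps_X) = fps_X * (1 - fps_X)"
proof -
  define F where "F = gf_213 (classF 3)"
  define P where "P = gf_213 (classP 2)"
  have F: "F = fps_X + P * F"
    using gf_classF[of 3] unfolding F_def P_def by simp
  have P: "P = fps_X + P * fps_X"
    using gf_classP[of 2] gf_classG_2 unfolding P_def by simp
  have "F * (1 - 2 * fps_X) = (F - P * F) * (1 - fps_X) + F * (P - P * fps_X - fps_X)"
    by (simp add: algebra_simps)
  also have "\<dots> = fps_X * (1 - fps_X)"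
    using F P by (metis add_diff_cancel_right' diff_self mult_zero_right add_0_right)
  finally show ?thesis
    unfolding F_def .
qed

section \<open>Cyclic permutations and their one-line notation\<close>

lemma subseq_Cons_iff_nth:
  "subseq (x # ys) xs \<longleftrightarrow> (\<exists>i<length xs. xs ! i = x \<and> subseq ys (drop (Suc i) xs))"
proof
  assume "subseq (x # ys) xs"
  then obtain us vs where "xs = us @ x # vs" "subseq ys vs"
    by (auto dest: list_emb_ConsD)
  then show "\<exists>i<length xs. xs ! i = x \<and> subseq ys (drop (Suc i) xs)"
    by (intro exI[of _ "length us"]) auto
next
  assume "\<exists>i<length xs. xs ! i = x \<and> subseq ys (drop (Suc i) xs)"
  then obtain i where i: "i < length xs" "xs ! i = x" "subseq ys (drop (Suc i) xs)"
    by blast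
  then have "subseq (x # ys) (take i xs @ xs ! i # drop (Suc i) xs)"
    by (intro list_emb_append2) simp
  then show "subseq (x # ys) xs"
    using id_take_nth_drop[OF i(1)] by simp
qed

lemma subseq3_iff_nth:
  "subseq [x, y, z] xs \<longleftrightarrow>
    (\<exists>i j l. i < j \<and> j < l \<and> l < length xs \<and> xs ! i = x \<and> xs ! j = y \<and> xs ! l = z)"
proof
  assume "subseq [x, y, z] xs"
  then obtain i where i: "i < length xs" "xs ! i = x" "subseq [y, z] (drop (Suc i) xs)"
    unfolding subseq_Cons_iff_nth[of x] by blast
  then obtain j where j: "j < length (drop (Suc i) xs)" "drop (Suc i) xs ! j = y"
    "subseq [z] (drop (Suc j) (drop (Suc i) xs))"
    unfolding subseq_Cons_iff_nth[of y] by blast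
  then obtain l where "l < length (drop (Suc j) (drop (Suc i) xs))"
    "drop (Suc j) (drop (Suc i) xs) ! l = z"
    unfolding subseq_Cons_iff_nth[of z] by blast
  then show "\<exists>i j l. i < j \<and> j < l \<and> l < length xs \<and> xs ! i = x \<and> xs ! j = y \<and> xs ! l = z"
    using i j by (intro exI[of _ i] exI[of _ "Suc i + j"] exI[of _ "Suc (Suc i + j) + l"])
      (auto simp: add.commute add.left_commute)
next
  assume "\<exists>i j l. i < j \<and> j < l \<and> l < length xs \<and> xs ! i = x \<and> xs ! j = y \<and> xs ! l = z"
  then obtain i j l where ijl: "i < j" "j < l" "l < length xs" "xs ! i = x" "xs ! j = y" "xs ! l = z"
    by blast
  have "subseq [z] (drop (Suc j) xs)"
    using ijl by (auto simp: subseq_singleton_left in_set_conv_nth intro!: exI[of _ "l - Suc j"])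
  then have "subseq [y, z] (drop (Suc i) xs)"
    using ijl subseq_Cons_iff_nth[of y "[z]" "drop (Suc i) xs"]
    by (auto intro!: exI[of _ "j - Suc i"])
  then show "subseq [x, y, z] xs"
    using ijl subseq_Cons_iff_nth[of x "[y, z]" xs] by auto
qed

lemma avoids_213_iff: "avoids xs [2, 1, 3] \<longleftrightarrow> avoids_213 xs"
proof -
  have less3: "(a::nat) < 3 \<longleftrightarrow> a = 0 \<or> a = 1 \<or> a = 2" for a
    by auto
  have len: "length [2, 1, 3::nat] = 3"
    by simp
  have "contains_pattern xs [2, 1, 3] \<longleftrightarrow>
    (\<exists>i j l. i < j \<and> j < l \<and> l < length xs \<and> xs ! j < xs ! i \<and> xs ! i < xs ! l)"
  proof
    assume "contains_pattern xs [2, 1, 3]"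
    then obtain idx where "strict_mono_on {..<3} idx" "\<forall>a<3. idx a < length xs"
      "\<forall>a<3. \<forall>b<3. (xs ! idx a < xs ! idx b) \<longleftrightarrow> ([2, 1, 3::nat] ! a < [2, 1, 3] ! b)"
      unfolding contains_pattern_def len by blast
    then show "\<exists>i j l. i < j \<and> j < l \<and> l < length xs \<and> xs ! j < xs ! i \<and> xs ! i < xs ! l"
      by (intro exI[of _ "idx 0"] exI[of _ "idx 1"] exI[of _ "idx 2"]) (auto intro: strict_mono_onD)
  next
    assume "\<exists>i j l. i < j \<and> j < l \<and> l < length xs \<and> xs ! j < xs ! i \<and> xs ! i < xs ! l"
    then obtain i j l where ijl: "i < j" "j < l" "l < length xs" "xs ! j < xs ! i" "xs ! i < xs ! l"
      by blast
    define idx where "idx a = (if a = 0 then i else if a = 1 then j else l)" for a :: nat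
    have "strict_mono_on {..<3} idx"
      by (rule strict_mono_onI) (use ijl in \<open>auto simp: idx_def less3\<close>)
    moreover have "\<forall>a<3. idx a < length xs"
      using ijl by (auto simp: idx_def less3)
    moreover have "\<forall>a<3. \<forall>b<3. (xs ! idx a < xs ! idx b) \<longleftrightarrow> ([2, 1, 3::nat] ! a < [2, 1, 3] ! b)"
      using ijl by (auto simp: idx_def less3)
    ultimately show "contains_pattern xs [2, 1, 3]"
      unfolding contains_pattern_def len by blast
  qed
  then show ?thesis
    unfolding avoids_def avoids_213_def subseq3_iff_nth by blast
qed

lemma length_delta [simp]: "length (delta k) = k"
  unfolding delta_def by simp

lemma delta_nth:
  assumes "a < k"
  shows "delta k ! a = k - a"
proof -
  have "rev [1..<k+1] ! a = [1..<k+1] ! (k - Suc a)"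
    using assms by (subst rev_nth) simp_all
  also have "\<dots> = k - a"
    using assms by (subst nth_upt) simp_all
  finally show ?thesis
    unfolding delta_def .
qed

lemma contains_delta_imp_has_decreasing:
  assumes "contains_pattern xs (delta k)"
  shows "has_decreasing (<) (nth xs) {..<length xs} k"
proof -
  obtain idx where mono: "strict_mono_on {..<k} idx" and idx: "\<forall>a<k. idx a < length xs"
    and order: "\<forall>a<k. \<forall>b<k. (xs ! idx a < xs ! idx b) \<longleftrightarrow> (delta k ! a < delta k ! b)"
    using assms unfolding contains_pattern_def length_delta by blast
  have "inj_on idx {..<k}"
    using mono by (rule strict_mono_on_imp_inj_on)
  moreover have "decreasing_on (<) (nth xs) (idx ` {..<k})"
    unfolding decreasing_on_def
  proof (intro ballI impI)
    fix s t assume "s \<in> idx ` {..<k}" "t \<in> idx ` {..<k}" "s < t"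
    then obtain a b where ab: "a < k" "b < k" "s = idx a" "t = idx b" "idx a < idx b"
      by auto
    then have "a < b"
      using mono by (metis lessThan_iff linorder_neqE_nat order_less_asym strict_mono_onD)
    then show "xs ! t < xs ! s"
      using order ab by (simp add: delta_nth)
  qed
  ultimately show ?thesis
    unfolding has_decreasing_def using idx by (intro exI[of _ "idx ` {..<k}"]) (auto simp: card_image)
qed

lemma has_decreasing_imp_contains_delta:
  assumes "has_decreasing (<) (nth xs) {..<length xs} k"
  shows "contains_pattern xs (delta k)"
proof -
  obtain S where S: "S \<subseteq> {..<length xs}" "finite S" "card S = k" "decreasing_on (<) (nth xs) S"
    using assms unfolding has_decreasing_def by blast
  define L where "L = sorted_list_of_set S"
  have L: "length L = k" "set L = S" "sorted_wrt (<) L"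
    unfolding L_def using S by auto
  have L_in: "L ! a \<in> S" if "a < k" for a
    using L that nth_mem by blast
  have L_less: "L ! a < L ! b" if "a < b" "b < k" for a b
    using L that sorted_wrt_nth_less by blast
  have L_dec: "xs ! (L ! b) < xs ! (L ! a)" if "a < b" "b < k" for a b
    using S(4) L_in[of a] L_in[of b] L_less[of a b] that unfolding decreasing_on_def by simp
  have "xs ! (L ! a) < xs ! (L ! b) \<longleftrightarrow> delta k ! a < delta k ! b" if "a < k" "b < k" for a b
    using L_dec[of a b] L_dec[of b a] that
    by (cases a b rule: linorder_cases) (auto simp: delta_nth)
  moreover have "strict_mono_on {..<k} (nth L)"
    by (rule strict_mono_onI) (use L_less in auto)
  ultimately show ?thesis
    unfolding contains_pattern_def length_delta using L_in S(1) by (intro exI[of _ "nth L"]) auto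
qed

lemma contains_delta_iff:
  "contains_pattern xs (delta k) \<longleftrightarrow> has_decreasing (<) (nth xs) {..<length xs} k"
  using contains_delta_imp_has_decreasing has_decreasing_imp_contains_delta by blast

lemma avoids_delta_one_line_iff:
  "avoids (one_line n p) (delta k) \<longleftrightarrow> \<not> has_decreasing (<) p {1..n} k"
proof -
  have nth: "one_line n p ! i = p (Suc i)" if "i < n" for i
    unfolding one_line_def using that by (simp del: upt_Suc)
  have "has_decreasing (<) (nth (one_line n p)) {..<n} k \<longleftrightarrow> has_decreasing (<) p {1..n} k"
  proof (rule has_decreasing_bij_betw)
    show "bij_betw Suc {..<n} {1..n}"
      by (simp add: bij_betw_Suc atLeastLessThanSuc_atLeastAtMost lessThan_atLeast0)
  qed (simp_all add: nth)
  moreover have "length (one_line n p) = n"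
    unfolding one_line_def by simp
  ultimately show ?thesis
    unfolding avoids_def contains_delta_iff by simp
qed

lemma cyclic_perm_cycle_form:
  assumes "cyclic_perm n p"
  shows "distinct (cycle_form n p)" "set (cycle_form n p) = {1..n}" "hd (cycle_form n p) = 1"
    and "cycle_of_list (cycle_form n p) = p"
proof -
  have perm: "p permutes {1..n}" and n: "1 \<le> n" and orbit: "{(p ^^ m) 1 | m. True} = {1..n}"
    using assms unfolding cyclic_perm_def by auto
  then have "permutation p"
    using permutation_permutes by blast
  have "range (\<lambda>m. (p ^^ m) 1) = {1..n}"
    using orbit by (simp add: full_SetCompr_eq)
  then have dist: "distinct (support p 1)" and set: "set (support p 1) = {1..n}"
    using cycle_of_permutation[OF \<open>permutation p\<close>, of 1] support_set[OF \<open>permutation p\<close>, of 1]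
    by simp_all
  then have "least_power p 1 = n"
    using distinct_card[OF dist] by simp
  then have C: "cycle_form n p = support p 1"
    unfolding cycle_form_def by (simp add: atLeast_upt)
  show "distinct (cycle_form n p)" "set (cycle_form n p) = {1..n}"
    using C dist set by simp_all
  show "hd (cycle_form n p) = 1"
    using n unfolding cycle_form_def by (simp add: hd_map upt_conv_Cons)
  show "cycle_of_list (cycle_form n p) = p"
  proof
    fix x
    show "cycle_of_list (cycle_form n p) x = p x"
      using cycle_restrict[OF \<open>permutation p\<close>, of x 1] id_outside_supp[of x "support p 1"]
        permutes_not_in[OF perm, of x] C set by (cases "x \<in> {1..n}") auto
  qed
qed

lemma cyclic_perm_cycle_of_list:
  assumes "distinct C" "set C = {1..n}" "C \<noteq> []" "hd C = 1"
  shows "cyclic_perm n (cycle_of_list C)" "cycle_form n (cycle_of_list C) = C"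
proof -
  have len: "length C = n"
    using distinct_card[OF assms(1)] assms(2) by simp
  have funpow: "(cycle_of_list C ^^ i) 1 = C ! i" if "i < n" for i
    using cycle_of_list_funpow_hd[OF assms(1)] assms(4) len that by simp
  show "cycle_form n (cycle_of_list C) = C"
    unfolding cycle_form_def using funpow len by (intro nth_equalityI) auto
  have perm: "cycle_of_list C permutes {1..n}"
    using cycle_permutes[of C] assms(2) by simp
  have "1 \<in> set C"
    using assms(3,4) by (metis list.set_sel(1))
  then have "{(cycle_of_list C ^^ m) 1 | m. True} \<subseteq> {1..n}"
    using permutes_in_funpow_image[OF perm] assms(2) by auto
  moreover have "{1..n} \<subseteq> {(cycle_of_list C ^^ m) 1 | m. True}"
  proof
    fix x assume "x \<in> {1..n}"
    then obtain i where "i < n" "x = C ! i"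
      using assms(2) len by (metis in_set_conv_nth)
    then have "x = (cycle_of_list C ^^ i) 1"
      using funpow by simp
    then show "x \<in> {(cycle_of_list C ^^ m) 1 | m. True}"
      by blast
  qed
  moreover have "1 \<le> n"
    using \<open>1 \<in> set C\<close> assms(2) by simp
  ultimately show "cyclic_perm n (cycle_of_list C)"
    unfolding cyclic_perm_def using perm by blast
qed

lemma cyclic_perm_avoids_iff:
  assumes "cyclic_perm n p"
  shows "avoids (one_line n p) (delta k) \<and> avoids (cycle_form n p) [2, 1, 3]
    \<longleftrightarrow> cycle_form_213 {1..<1+n} (cycle_form n p) \<and> classF k (cycle_form n p)"
proof -
  note C = cyclic_perm_cycle_form[OF assms]
  have "cycle_form n p \<noteq> []"
    using assms unfolding cyclic_perm_def cycle_form_def by auto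
  then have "cycle_form_213 {1..<1+n} (cycle_form n p) \<longleftrightarrow> avoids_213 (cycle_form n p)"
    using C unfolding cycle_form_213_def by (auto simp: atLeastLessThanSuc_atLeastAtMost)
  moreover have "classF k (cycle_form n p) \<longleftrightarrow> \<not> has_decreasing (<) p {1..n} k"
    using C unfolding classF_def has_dec_def by simp
  ultimately show ?thesis
    using avoids_213_iff avoids_delta_one_line_iff by auto
qed

lemma cycle_form_213_cyclic_perm:
  assumes "cycle_form_213 {1..<1+n} C"
  shows "cyclic_perm n (cycle_of_list C)" "cycle_form n (cycle_of_list C) = C"
  using assms cycle_form_213_hd[of 1 n C] cyclic_perm_cycle_of_list[of C n]
  unfolding cycle_form_213_def by (auto simp: atLeastLessThanSuc_atLeastAtMost)

lemma a_213_eq_count: "a_213 n k = count_213 1 n (classF k)"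
proof -
  let ?PS = "{p. cyclic_perm n p \<and> avoids (one_line n p) (delta k) \<and> avoids (cycle_form n p) [2, 1, 3]}"
  let ?CS = "{C. cycle_form_213 {1..<1+n} C \<and> classF k C}"
  have "bij_betw (cycle_form n) ?PS ?CS"
  proof (rule bij_betw_byWitness[where f' = cycle_of_list])
    show "\<forall>p\<in>?PS. cycle_of_list (cycle_form n p) = p"
      using cyclic_perm_cycle_form by blast
    show "\<forall>C\<in>?CS. cycle_form n (cycle_of_list C) = C"
      using cycle_form_213_cyclic_perm by blast
    show "cycle_form n ` ?PS \<subseteq> ?CS"
      using cyclic_perm_avoids_iff by auto
    show "cycle_of_list ` ?CS \<subseteq> ?PS"
      using cycle_form_213_cyclic_perm cyclic_perm_avoids_iff by fastforce
  qed
  then show ?thesis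
    unfolding a_213_def count_213_def by (rule bij_betw_same_card)
qed

lemma f_213_eq_gf: "f_213 k = gf_213 (classF k)"
proof (rule fps_ext)
  fix n
  show "fps_nth (f_213 k) n = fps_nth (gf_213 (classF k)) n"
    using a_213_eq_count[of n k] count_213_shift[of "classF k" 1 n] unfolding f_213_def gf_213_def by simp
qed

theorem corollary2p8:
  shows "(\<forall>k\<ge>4. f_213 k = fps_X / (1 - f_213 (k - 1)))
         \<and> f_213 1 = 0
         \<and> f_213 2 = fps_X
         \<and> f_213 3 = fps_X * (1 - fps_X) / (1 - 2 * fps_X)"
proof -
  have div: "a = c / b" if "a * b = c" "fps_nth b 0 \<noteq> 0" for a b c :: "real fps"
    using that nonzero_mult_div_cancel_right[of b a] by auto
  have "f_213 k = fps_X / (1 - f_213 (k - 1))" if "4 \<le> k" for k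
    unfolding f_213_eq_gf using that by (intro div gf_classF_rec) simp_all
  moreover have "f_213 3 = fps_X * (1 - fps_X) / (1 - 2 * fps_X)"
    unfolding f_213_eq_gf by (intro div gf_classF_3) simp
  ultimately show ?thesis
    unfolding f_213_eq_gf using gf_213_1(1) gf_classF_2 by simp
qed

end
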